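(* Let $p < q$ be primes and $n = pq$. Then the line graph $L(\Gamma(\mathbb{Z}_n))$ is very cost effective.
   Context: $\mathbb{Z}_n$ is the ring of residue classes modulo $n$. The zero-divisor graph $\Gamma(\mathbb{Z}_n)$ has as vertices the nonzero zero-divisors of $\mathbb{Z}_n$, two distinct vertices being adjacent iff their product is $0$. The line graph $L(G)$ of a simple graph $G$ has the edges of $G$ as vertices, two being adjacent iff the corresponding edges share an endpoint. For a graph $G=(V,E)$ and $S\subseteq V$, a vertex $v\in S$ is very cost effective if $|N(v)\cap S| < |N(v)\cap (V\setminus S)|$; $S$ is very cost effective if every vertex of $S$ is. A bipartition $\{S, V\setminus S\}$ is very cost effective if both parts are very cost effective, and $G$ is very cost effective if it has a very cost effective bipartition. *)

theory Defs
  imports Main "HOL-Computational_Algebra.Primes"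
begin

text \<open>A simple graph is given by a vertex set V and a symmetric irreflexive
  adjacency relation E (only its restriction to V matters).\<close>

definition nbhd :: "'a set \<Rightarrow> ('a \<Rightarrow> 'a \<Rightarrow> bool) \<Rightarrow> 'a \<Rightarrow> 'a set" where
  "nbhd V E v = {u \<in> V. E v u}"

definition very_cost_effective_vertex ::
  "'a set \<Rightarrow> ('a \<Rightarrow> 'a \<Rightarrow> bool) \<Rightarrow> 'a set \<Rightarrow> 'a \<Rightarrow> bool" where
  "very_cost_effective_vertex V E S v \<longleftrightarrow>
     card (nbhd V E v \<inter> S) < card (nbhd V E v \<inter> (V - S))"

definition very_cost_effective_set ::
  "'a set \<Rightarrow> ('a \<Rightarrow> 'a \<Rightarrow> bool) \<Rightarrow> 'a set \<Rightarrow> bool" where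
  "very_cost_effective_set V E S \<longleftrightarrow> (\<forall>v\<in>S. very_cost_effective_vertex V E S v)"

definition very_cost_effective_bipartition ::
  "'a set \<Rightarrow> ('a \<Rightarrow> 'a \<Rightarrow> bool) \<Rightarrow> 'a set \<Rightarrow> bool" where
  "very_cost_effective_bipartition V E S \<longleftrightarrow>
     S \<subseteq> V \<and> very_cost_effective_set V E S \<and> very_cost_effective_set V E (V - S)"

definition very_cost_effective_graph ::
  "'a set \<Rightarrow> ('a \<Rightarrow> 'a \<Rightarrow> bool) \<Rightarrow> bool" where
  "very_cost_effective_graph V E \<longleftrightarrow> (\<exists>S. very_cost_effective_bipartition V E S)"

text \<open>Zero-divisor graph of Z_n; residue classes represented by 0..n-1.\<close>

definition zd_vertices :: "nat \<Rightarrow> nat set" where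
  "zd_vertices n = {x \<in> {1..<n}. \<exists>y \<in> {1..<n}. (x * y) mod n = 0}"

definition zd_adj :: "nat \<Rightarrow> nat \<Rightarrow> nat \<Rightarrow> bool" where
  "zd_adj n x y \<longleftrightarrow> x \<noteq> y \<and> (x * y) mod n = 0"

text \<open>Line graph: vertices are edges of G, represented as 2-element sets.\<close>

definition line_vertices :: "'a set \<Rightarrow> ('a \<Rightarrow> 'a \<Rightarrow> bool) \<Rightarrow> 'a set set" where
  "line_vertices V E = {{u, v} | u v. u \<in> V \<and> v \<in> V \<and> u \<noteq> v \<and> E u v}"

definition line_adj :: "'a set \<Rightarrow> 'a set \<Rightarrow> bool" where
  "line_adj e f \<longleftrightarrow> e \<noteq> f \<and> e \<inter> f \<noteq> {}"

end

theory Submission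
  imports Defs
begin

text \<open>For distinct primes \<open>p\<close> and \<open>q\<close>, the graph \<open>\<Gamma>(\<int>\<^sub>p\<^sub>q)\<close> is the complete
  bipartite graph between the nonzero multiples of \<open>q\<close> and those of \<open>p\<close>, so its line graph
  is the rook's graph on a \<open>(p - 1) \<times> (q - 1)\<close> grid. Colour the grid like a chessboard.
  Since \<open>q - 1\<close> is even, a cell sees one fewer cell of its own colour than of the other
  colour in its row, and no more of its own colour than of the other in its column. So
  every vertex has more neighbours in the other colour class, and the two colour classes
  form a very cost effective bipartition.\<close>

definition rook_adj :: "'a \<times> 'b \<Rightarrow> 'a \<times> 'b \<Rightarrow> bool" where
  "rook_adj u w \<longleftrightarrow> u \<noteq> w \<and> (fst u = fst w \<or> snd u = snd w)"

lemma very_cost_effective_bipartition_colouring: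
  assumes "\<And>v. v \<in> V \<Longrightarrow>
    card {u \<in> nbhd V E v. c u = c v} < card {u \<in> nbhd V E v. c u \<noteq> c v}"
  shows "very_cost_effective_bipartition V E {v \<in> V. c v}"
proof -
  let ?S = "{v \<in> V. c v}"
  have "very_cost_effective_vertex V E ?S v" if "v \<in> ?S" for v
  proof -
    have "nbhd V E v \<inter> ?S = {u \<in> nbhd V E v. c u = c v}"
      and "nbhd V E v \<inter> (V - ?S) = {u \<in> nbhd V E v. c u \<noteq> c v}"
      using that by (auto simp: nbhd_def)
    with assms[of v] that show ?thesis by (simp only: very_cost_effective_vertex_def) simp
  qed
  moreover have "very_cost_effective_vertex V E (V - ?S) v" if "v \<in> V - ?S" for v
  proof -
    have "nbhd V E v \<inter> (V - ?S) = {u \<in> nbhd V E v. c u = c v}"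
      and "nbhd V E v \<inter> (V - (V - ?S)) = {u \<in> nbhd V E v. c u \<noteq> c v}"
      using that by (auto simp: nbhd_def)
    with assms[of v] that show ?thesis by (simp only: very_cost_effective_vertex_def) simp
  qed
  ultimately show ?thesis
    by (auto simp: very_cost_effective_bipartition_def very_cost_effective_set_def)
qed

lemma very_cost_effective_bipartition_image:
  assumes "inj_on h V" and adj: "\<And>u w. u \<in> V \<Longrightarrow> w \<in> V \<Longrightarrow> E' (h u) (h w) \<longleftrightarrow> E u w"
    and "very_cost_effective_bipartition V E S"
  shows "very_cost_effective_bipartition (h ` V) E' (h ` S)"
proof -
  have S: "S \<subseteq> V" using assms(3) by (simp add: very_cost_effective_bipartition_def)
  have nbhd_image: "nbhd (h ` V) E' (h v) \<inter> h ` T = h ` (nbhd V E v \<inter> T)"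
    if "v \<in> V" "T \<subseteq> V" for v T
    using that adj by (auto simp: nbhd_def)
  have card_nbhd: "card (nbhd (h ` V) E' (h v) \<inter> h ` T) = card (nbhd V E v \<inter> T)"
    if "v \<in> V" "T \<subseteq> V" for v T
  proof -
    have "inj_on h (nbhd V E v \<inter> T)"
      using inj_on_subset[OF assms(1)] that(2) by blast
    then show ?thesis by (simp add: nbhd_image[OF that] card_image)
  qed
  have diff: "h ` V - h ` T = h ` (V - T)" if "T \<subseteq> V" for T
    using that assms(1) by (simp add: inj_on_image_set_diff)
  have image_vertex: "very_cost_effective_vertex (h ` V) E' (h ` T) (h v)"
    if "very_cost_effective_vertex V E T v" "v \<in> V" "T \<subseteq> V" for v T
    using that unfolding very_cost_effective_vertex_def
    by (simp add: diff card_nbhd)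
  have S_vertices: "\<forall>v\<in>S. very_cost_effective_vertex V E S v"
    and rest_vertices: "\<forall>v\<in>V - S. very_cost_effective_vertex V E (V - S) v"
    using assms(3)
    by (simp_all add: very_cost_effective_bipartition_def very_cost_effective_set_def)
  show ?thesis
    unfolding very_cost_effective_bipartition_def very_cost_effective_set_def diff[OF S]
  proof (intro conjI ballI)
    show "h ` S \<subseteq> h ` V" using S by (rule image_mono)
  next
    fix x assume "x \<in> h ` S"
    then obtain v where "v \<in> S" and "x = h v" by blast
    with S S_vertices show "very_cost_effective_vertex (h ` V) E' (h ` S) x"
      by (auto intro: image_vertex)
  next
    fix x assume "x \<in> h ` (V - S)"
    then obtain v where "v \<in> V - S" and "x = h v" by blast
    with rest_vertices show "very_cost_effective_vertex (h ` V) E' (h ` (V - S)) x"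
      by (auto intro: image_vertex)
  qed
qed

lemma card_same_parity_le_opposite_parity:
  fixes a b j :: nat
  assumes "j \<in> {a..<b}"
  shows "card {i \<in> {a..<b}. i \<noteq> j \<and> even (i + j)} \<le> card {i \<in> {a..<b}. odd (i + j)}"
proof (rule card_inj_on_le)
  let ?same = "{i \<in> {a..<b}. i \<noteq> j \<and> even (i + j)}"
  \<comment> \<open>moving one step towards \<open>j\<close> flips the parity and never lands on \<open>j\<close>\<close>
  let ?step = "\<lambda>i. if i < j then i + 1 else i - 1"
  have below: "?step i < j" if "i < j" and "even (i + j)" for i
  proof -
    have "i + 1 \<noteq> j" using that(2) by auto
    with that(1) show ?thesis by simp
  qed
  have above: "j < ?step i" if "j < i" and "even (i + j)" for i
  proof -
    have "i - 1 \<noteq> j" using that by (cases i) auto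
    with that(1) show ?thesis by simp
  qed
  show "inj_on ?step ?same"
  proof (rule inj_onI)
    fix i i' assume i: "i \<in> ?same" and i': "i' \<in> ?same" and eq: "?step i = ?step i'"
    have "i < j \<or> j < i" and "i' < j \<or> j < i'" using i i' by auto
    then show "i = i'"
    proof (elim disjE)
      assume "i < j" "j < i'"
      then show ?thesis using below[of i] above[of i'] i i' eq by simp
    next
      assume "j < i" "i' < j"
      then show ?thesis using above[of i] below[of i'] i i' eq by simp
    qed (use eq in auto)
  qed
  show "?step ` ?same \<subseteq> {i \<in> {a..<b}. odd (i + j)}"
  proof
    fix x assume "x \<in> ?step ` ?same"
    then obtain i where i: "i \<in> {a..<b}" "i \<noteq> j" "even (i + j)" and x: "x = ?step i" by blast
    show "x \<in> {i \<in> {a..<b}. odd (i + j)}"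
    proof (cases "i < j")
      case True
      then show ?thesis using i x assms by auto
    next
      case False
      then obtain m where "i = Suc m" and "j \<le> m" using i(2) by (cases i) auto
      then show ?thesis using i x assms by auto
    qed
  qed
qed simp

lemma card_same_parity_less_opposite_parity:
  fixes a b j :: nat
  assumes "j \<in> {a..<b}" and "even (b - a)"
  shows "card {i \<in> {a..<b}. i \<noteq> j \<and> even (i + j)} < card {i \<in> {a..<b}. odd (i + j)}"
proof -
  let ?same = "{i \<in> {a..<b}. i \<noteq> j \<and> even (i + j)}" and ?opp = "{i \<in> {a..<b}. odd (i + j)}"
  have "card ?same + card ?opp = card (?same \<union> ?opp)"
    by (rule card_Un_disjoint[symmetric]) auto
  also have "?same \<union> ?opp = {a..<b} - {j}" by auto
  finally have "card ?same + card ?opp = b - a - 1" using assms(1) by simp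
  moreover have "odd (b - a - 1)" using assms by auto
  ultimately have "card ?same \<noteq> card ?opp" by (metis dvd_triv_left mult_2)
  with card_same_parity_le_opposite_parity[OF assms(1)] show ?thesis by simp
qed

lemma card_rook_nbhd:
  assumes "finite A" and "finite B" and "k \<in> A" and "j \<in> B"
  shows "card {w \<in> nbhd (A \<times> B) rook_adj (k, j). P w} =
    card {j' \<in> B. j' \<noteq> j \<and> P (k, j')} + card {k' \<in> A. k' \<noteq> k \<and> P (k', j)}"
proof -
  have "{w \<in> nbhd (A \<times> B) rook_adj (k, j). P w} =
      Pair k ` {j' \<in> B. j' \<noteq> j \<and> P (k, j')} \<union> (\<lambda>k'. (k', j)) ` {k' \<in> A. k' \<noteq> k \<and> P (k', j)}"
    using assms by (auto simp: nbhd_def rook_adj_def)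
  moreover have "Pair k ` {j' \<in> B. j' \<noteq> j \<and> P (k, j')} \<inter>
      (\<lambda>k'. (k', j)) ` {k' \<in> A. k' \<noteq> k \<and> P (k', j)} = {}"
    by auto
  ultimately show ?thesis
    using assms by (simp add: card_Un_disjoint card_image inj_on_def)
qed

lemma rook_chessboard_same_colour_less:
  fixes a b c d :: nat
  assumes "(k, j) \<in> {a..<b} \<times> {c..<d}" and "even (d - c)"
  shows "card {w \<in> nbhd ({a..<b} \<times> {c..<d}) rook_adj (k, j). even (fst w + snd w) = even (k + j)}
       < card {w \<in> nbhd ({a..<b} \<times> {c..<d}) rook_adj (k, j). even (fst w + snd w) \<noteq> even (k + j)}"
proof -
  have k: "k \<in> {a..<b}" and j: "j \<in> {c..<d}" using assms(1) by auto
  note card_nbhd = card_rook_nbhd[OF finite_atLeastLessThan finite_atLeastLessThan k j]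
  have row_same: "{j' \<in> {c..<d}. j' \<noteq> j \<and> even (k + j') = even (k + j)} =
      {j' \<in> {c..<d}. j' \<noteq> j \<and> even (j' + j)}"
   and row_opp: "{j' \<in> {c..<d}. j' \<noteq> j \<and> even (k + j') \<noteq> even (k + j)} =
      {j' \<in> {c..<d}. odd (j' + j)}"
   and col_same: "{k' \<in> {a..<b}. k' \<noteq> k \<and> even (k' + j) = even (k + j)} =
      {k' \<in> {a..<b}. k' \<noteq> k \<and> even (k' + k)}"
   and col_opp: "{k' \<in> {a..<b}. k' \<noteq> k \<and> even (k' + j) \<noteq> even (k + j)} =
      {k' \<in> {a..<b}. odd (k' + k)}"
    by auto
  have "card {w \<in> nbhd ({a..<b} \<times> {c..<d}) rook_adj (k, j). even (fst w + snd w) = even (k + j)}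
      = card {j' \<in> {c..<d}. j' \<noteq> j \<and> even (j' + j)} + card {k' \<in> {a..<b}. k' \<noteq> k \<and> even (k' + k)}"
    by (simp only: card_nbhd fst_conv snd_conv row_same col_same)
  also have "\<dots> < card {j' \<in> {c..<d}. odd (j' + j)} + card {k' \<in> {a..<b}. odd (k' + k)}"
    using card_same_parity_less_opposite_parity[OF j assms(2)] card_same_parity_le_opposite_parity[OF k]
    by (rule add_less_le_mono)
  also have "\<dots> = card {w \<in> nbhd ({a..<b} \<times> {c..<d}) rook_adj (k, j). even (fst w + snd w) \<noteq> even (k + j)}"
    by (simp only: card_nbhd fst_conv snd_conv row_opp col_opp)
  finally show ?thesis .
qed

lemma very_cost_effective_rook_graph:
  fixes a b c d :: nat
  assumes "even (d - c)"
  shows "very_cost_effective_graph ({a..<b} \<times> {c..<d}) rook_adj"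
proof -
  have "very_cost_effective_bipartition ({a..<b} \<times> {c..<d}) rook_adj
      {w \<in> {a..<b} \<times> {c..<d}. even (fst w + snd w)}"
  proof (rule very_cost_effective_bipartition_colouring)
    fix v assume v_in: "v \<in> {a..<b} \<times> {c..<d}"
    obtain k j where v: "v = (k, j)" by fastforce
    show "card {u \<in> nbhd ({a..<b} \<times> {c..<d}) rook_adj v. even (fst u + snd u) = even (fst v + snd v)}
        < card {u \<in> nbhd ({a..<b} \<times> {c..<d}) rook_adj v. even (fst u + snd u) \<noteq> even (fst v + snd v)}"
      using v_in unfolding v fst_conv snd_conv by (rule rook_chessboard_same_colour_less[OF _ assms])
  qed
  then show ?thesis unfolding very_cost_effective_graph_def by blast
qed

lemma line_graph_of_complete_bipartite:
  assumes "inj_on f A" and "inj_on g B" and disj: "f ` A \<inter> g ` B = {}"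
    and V: "V = f ` A \<union> g ` B"
    and E: "\<And>x y. x \<in> V \<Longrightarrow> y \<in> V \<Longrightarrow>
      E x y \<longleftrightarrow> x \<in> f ` A \<and> y \<in> g ` B \<or> x \<in> g ` B \<and> y \<in> f ` A"
  shows "line_vertices V E = (\<lambda>(a, b). {f a, g b}) ` (A \<times> B)"
    and "inj_on (\<lambda>(a, b). {f a, g b}) (A \<times> B)"
    and "\<And>u w. u \<in> A \<times> B \<Longrightarrow> w \<in> A \<times> B \<Longrightarrow>
      line_adj ((\<lambda>(a, b). {f a, g b}) u) ((\<lambda>(a, b). {f a, g b}) w) \<longleftrightarrow> rook_adj u w"
proof -
  have edge_eq: "{f a, g b} = {f a', g b'} \<longleftrightarrow> a = a' \<and> b = b'"
    and edge_meet: "{f a, g b} \<inter> {f a', g b'} \<noteq> {} \<longleftrightarrow> a = a' \<or> b = b'"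
    if "a \<in> A" "b \<in> B" "a' \<in> A" "b' \<in> B" for a b a' b'
  proof -
    have "f a \<noteq> g b'" and "g b \<noteq> f a'" using disj that by blast+
    moreover have "f a = f a' \<longleftrightarrow> a = a'" and "g b = g b' \<longleftrightarrow> b = b'"
      using that assms(1,2) by (auto dest: inj_onD)
    ultimately show "{f a, g b} = {f a', g b'} \<longleftrightarrow> a = a' \<and> b = b'"
      and "{f a, g b} \<inter> {f a', g b'} \<noteq> {} \<longleftrightarrow> a = a' \<or> b = b'"
      by (auto simp: doubleton_eq_iff)
  qed
  show "line_vertices V E = (\<lambda>(a, b). {f a, g b}) ` (A \<times> B)"
  proof
    show "line_vertices V E \<subseteq> (\<lambda>(a, b). {f a, g b}) ` (A \<times> B)"
    proof
      fix e assume "e \<in> line_vertices V E"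
      then obtain x y where "e = {x, y}" and "x \<in> V" and "y \<in> V" and "E x y"
        unfolding line_vertices_def by blast
      then have "x \<in> f ` A \<and> y \<in> g ` B \<or> x \<in> g ` B \<and> y \<in> f ` A" using E by blast
      then obtain a b where "a \<in> A" "b \<in> B" "e = {f a, g b}"
        using \<open>e = {x, y}\<close> by (auto simp: insert_commute)
      then show "e \<in> (\<lambda>(a, b). {f a, g b}) ` (A \<times> B)" by blast
    qed
    show "(\<lambda>(a, b). {f a, g b}) ` (A \<times> B) \<subseteq> line_vertices V E"
    proof
      fix e assume "e \<in> (\<lambda>(a, b). {f a, g b}) ` (A \<times> B)"
      then obtain a b where "a \<in> A" "b \<in> B" "e = {f a, g b}" by blast
      moreover from this have "f a \<in> V" "g b \<in> V" "f a \<noteq> g b" "E (f a) (g b)"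
        using disj V E by blast+
      ultimately show "e \<in> line_vertices V E" unfolding line_vertices_def by blast
    qed
  qed
  show "inj_on (\<lambda>(a, b). {f a, g b}) (A \<times> B)"
    by (rule inj_onI) (clarsimp simp: edge_eq)
  show "line_adj ((\<lambda>(a, b). {f a, g b}) u) ((\<lambda>(a, b). {f a, g b}) w) \<longleftrightarrow> rook_adj u w"
    if "u \<in> A \<times> B" "w \<in> A \<times> B" for u w
  proof -
    obtain a b a' b' where u: "u = (a, b)" and w: "w = (a', b')" by fastforce
    with that have "a \<in> A" "b \<in> B" "a' \<in> A" "b' \<in> B" by auto
    then show ?thesis
      using edge_eq[of a b a' b'] edge_meet[of a b a' b'] unfolding u w line_adj_def rook_adj_def
      by auto
  qed
qed

lemma very_cost_effective_line_graph_of_complete_bipartite: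
  assumes "inj_on f A" and "inj_on g B" and "f ` A \<inter> g ` B = {}"
    and "V = f ` A \<union> g ` B"
    and "\<And>x y. x \<in> V \<Longrightarrow> y \<in> V \<Longrightarrow>
      E x y \<longleftrightarrow> x \<in> f ` A \<and> y \<in> g ` B \<or> x \<in> g ` B \<and> y \<in> f ` A"
    and "very_cost_effective_graph (A \<times> B) rook_adj"
  shows "very_cost_effective_graph (line_vertices V E) line_adj"
proof -
  let ?edge = "\<lambda>(a, b). {f a, g b}"
  have line_vertices: "line_vertices V E = ?edge ` (A \<times> B)"
    and edge_inj: "inj_on ?edge (A \<times> B)"
    and edge_adj: "\<And>u w. u \<in> A \<times> B \<Longrightarrow> w \<in> A \<times> B \<Longrightarrow>
      line_adj (?edge u) (?edge w) \<longleftrightarrow> rook_adj u w"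
    by (rule line_graph_of_complete_bipartite[OF assms(1-4)]; simp add: assms(5))+
  obtain S where S: "very_cost_effective_bipartition (A \<times> B) rook_adj S"
    using assms(6) unfolding very_cost_effective_graph_def by blast
  have "very_cost_effective_bipartition (?edge ` (A \<times> B)) line_adj (?edge ` S)"
    by (rule very_cost_effective_bipartition_image[where E = rook_adj])
      (use edge_inj edge_adj S in simp_all)
  then show ?thesis unfolding very_cost_effective_graph_def line_vertices by blast
qed

lemma prime_product_not_dvd_same_factor:
  fixes p q k k' :: nat
  assumes "prime p" and "prime q" and "p \<noteq> q" and "k \<in> {1..<p}" and "k' \<in> {1..<p}"
  shows "\<not> p * q dvd k * q * (k' * q)"
proof
  assume "p * q dvd k * q * (k' * q)"
  then have "p dvd k * q * (k' * q)" by (rule dvd_mult_left)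
  then have "p dvd k \<or> p dvd k' \<or> p dvd q"
    by (auto simp: prime_dvd_mult_iff[OF assms(1)])
  moreover have "\<not> p dvd q" using assms(1-3) primes_dvd_imp_eq by blast
  ultimately show False using assms(4,5) by (auto dest: dvd_imp_le)
qed

lemma prime_product_multiples_distinct:
  fixes p q k j :: nat
  assumes "prime p" and "prime q" and "p \<noteq> q" and "k \<in> {1..<p}"
  shows "k * q \<noteq> j * p"
proof
  assume "k * q = j * p"
  then have "p dvd k * q" by simp
  moreover have "\<not> p dvd q" using assms(1-3) primes_dvd_imp_eq by blast
  ultimately have "p dvd k" using assms(1) by (simp add: prime_dvd_mult_iff)
  then show False using assms(4) by (auto dest: dvd_imp_le)
qed

lemma zd_vertices_prime_product:
  fixes p q :: nat
  assumes "prime p" and "prime q" and "p \<noteq> q"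
  shows "zd_vertices (p * q) = (\<lambda>k. k * q) ` {1..<p} \<union> (\<lambda>j. j * p) ` {1..<q}"
proof
  have not_both: "\<not> (p dvd z \<and> q dvd z)" if "z \<in> {1..<p * q}" for z
  proof
    assume "p dvd z \<and> q dvd z"
    then have "p * q dvd z"
      using assms primes_coprime by (blast intro: divides_mult)
    then show False using that by (auto dest: dvd_imp_le)
  qed
  show "zd_vertices (p * q) \<subseteq> (\<lambda>k. k * q) ` {1..<p} \<union> (\<lambda>j. j * p) ` {1..<q}"
  proof
    fix x assume "x \<in> zd_vertices (p * q)"
    then obtain y where x: "x \<in> {1..<p * q}" and y: "y \<in> {1..<p * q}" and "p * q dvd x * y"
      unfolding zd_vertices_def by (auto simp: mod_eq_0_iff_dvd)
    then have "p dvd x \<or> p dvd y" and "q dvd x \<or> q dvd y"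
      using assms(1,2) by (auto simp: prime_dvd_mult_iff dest: dvd_mult_left dvd_mult_right)
    then have "p dvd x \<or> q dvd x" using not_both[OF y] by blast
    then show "x \<in> (\<lambda>k. k * q) ` {1..<p} \<union> (\<lambda>j. j * p) ` {1..<q}"
      using x by (auto elim!: dvdE simp: mult.commute)
  qed
  have "1 < p" and "1 < q" using assms prime_gt_1_nat by auto
  then have "p \<in> {1..<p * q}" and "q \<in> {1..<p * q}" by simp_all
  moreover have "k * q * p mod (p * q) = 0" and "j * p * q mod (p * q) = 0" for k j
    by (simp_all add: ac_simps)
  moreover have "k * q \<in> {1..<p * q}" if "k \<in> {1..<p}" for k
    using that \<open>1 < q\<close> by (simp add: mult.commute)
  moreover have "j * p \<in> {1..<p * q}" if "j \<in> {1..<q}" for j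
    using that \<open>1 < p\<close> by simp
  ultimately show "(\<lambda>k. k * q) ` {1..<p} \<union> (\<lambda>j. j * p) ` {1..<q} \<subseteq> zd_vertices (p * q)"
    unfolding zd_vertices_def by blast
qed

lemma zd_adj_prime_product:
  fixes p q x y :: nat
  assumes "prime p" and "prime q" and "p \<noteq> q"
    and "x \<in> zd_vertices (p * q)" and "y \<in> zd_vertices (p * q)"
  shows "zd_adj (p * q) x y \<longleftrightarrow>
    x \<in> (\<lambda>k. k * q) ` {1..<p} \<and> y \<in> (\<lambda>j. j * p) ` {1..<q} \<or>
    x \<in> (\<lambda>j. j * p) ` {1..<q} \<and> y \<in> (\<lambda>k. k * q) ` {1..<p}"
proof -
  have within_q: "\<not> zd_adj (p * q) (k * q) (k' * q)" if "k \<in> {1..<p}" "k' \<in> {1..<p}" for k k'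
    using prime_product_not_dvd_same_factor[OF assms(1-3) that]
    by (simp add: zd_adj_def mod_eq_0_iff_dvd)
  have within_p: "\<not> zd_adj (p * q) (j * p) (j' * p)" if "j \<in> {1..<q}" "j' \<in> {1..<q}" for j j'
    using prime_product_not_dvd_same_factor[OF assms(2,1) assms(3)[symmetric] that]
    by (simp add: zd_adj_def mod_eq_0_iff_dvd mult.commute[of p q])
  have across: "zd_adj (p * q) (k * q) (j * p)" "zd_adj (p * q) (j * p) (k * q)"
    if "k \<in> {1..<p}" for k j
  proof -
    have "k * q * (j * p) = k * j * (p * q)" by simp
    then show "zd_adj (p * q) (k * q) (j * p)" "zd_adj (p * q) (j * p) (k * q)"
      using prime_product_multiples_distinct[OF assms(1-3) that, of j]
      by (simp_all add: zd_adj_def mult.commute[of "j * p"])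
  qed
  show ?thesis
    using assms(4,5) within_q within_p across
    unfolding zd_vertices_prime_product[OF assms(1-3)] by blast
qed

theorem mainTheorem4:
  fixes p q :: nat
  assumes "prime p" and "prime q" and "p < q"
  shows "very_cost_effective_graph
           (line_vertices (zd_vertices (p * q)) (zd_adj (p * q))) line_adj"
proof (rule very_cost_effective_line_graph_of_complete_bipartite)
  have "p \<noteq> q" using assms(3) by simp
  have "2 < q" using assms(3) prime_ge_2_nat[OF assms(1)] by linarith
  then have "even (q - 1)" using prime_odd_nat[OF assms(2)] by simp
  then show "very_cost_effective_graph ({1..<p} \<times> {1..<q}) rook_adj"
    by (rule very_cost_effective_rook_graph)
  show "inj_on (\<lambda>k. k * q) {1..<p}" and "inj_on (\<lambda>j. j * p) {1..<q}"
    using assms prime_gt_0_nat by (auto simp: inj_on_def)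
  show "(\<lambda>k. k * q) ` {1..<p} \<inter> (\<lambda>j. j * p) ` {1..<q} = {}"
    using prime_product_multiples_distinct[OF assms(1,2) \<open>p \<noteq> q\<close>] by blast
  show "zd_vertices (p * q) = (\<lambda>k. k * q) ` {1..<p} \<union> (\<lambda>j. j * p) ` {1..<q}"
    by (rule zd_vertices_prime_product[OF assms(1,2) \<open>p \<noteq> q\<close>])
  show "zd_adj (p * q) x y \<longleftrightarrow>
      x \<in> (\<lambda>k. k * q) ` {1..<p} \<and> y \<in> (\<lambda>j. j * p) ` {1..<q} \<or>
      x \<in> (\<lambda>j. j * p) ` {1..<q} \<and> y \<in> (\<lambda>k. k * q) ` {1..<p}"
    if "x \<in> zd_vertices (p * q)" and "y \<in> zd_vertices (p * q)" for x y
    using zd_adj_prime_product[OF assms(1,2) \<open>p \<noteq> q\<close> that] .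
qed

end
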